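(* Let $\Sigma$ be a smooth surface in $\mathbb{R}^3$ and let $\Gamma$ be a line of curvature on $\Sigma$ whose geodesic curvature on $\Sigma$ is a constant $c\neq 0$. If the torsion of $\Gamma$, regarded as a space curve in $\mathbb{R}^3$, is identically zero, then $\Gamma$ is a part of a circle, and $\Sigma$ is orthogonal to a sphere of radius $\frac{1}{|c|}$ along $\Gamma$.
   Context: A line of curvature on $\Sigma$ is a curve whose tangent vector is at every point a principal direction of $\Sigma$. *)

theory Defs
  imports "HOL-Analysis.Analysis"
begin

text \<open>C-infinity on an open set: the function is continuous and all first-order
  partial derivatives (directional derivatives along the standard basis) exist
  at every point of the set and are again C-infinity (coinductively, i.e. all
  partial derivatives of all orders exist and are continuous).\<close>
coinductive smooth_on :: "('a::euclidean_space) set \<Rightarrow> ('a \<Rightarrow> 'b::real_normed_vector) \<Rightarrow> bool" where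
  "continuous_on U f \<Longrightarrow>
   (\<forall>i\<in>Basis. \<exists>g. (\<forall>x\<in>U. ((\<lambda>s::real. f (x + s *\<^sub>R i)) has_vector_derivative g x) (at 0))
                    \<and> smooth_on U g)
   \<Longrightarrow> smooth_on U f"

definition regular_surface :: "(real^2 \<Rightarrow> real^3) \<Rightarrow> (real^2) set \<Rightarrow> bool" where
  "regular_surface X U \<longleftrightarrow> open U \<and> U \<noteq> {} \<and> smooth_on U X \<and> inj_on X U \<and>
     (\<forall>p\<in>U. inj (frechet_derivative X (at p)))"

definition unit_normal :: "(real^2 \<Rightarrow> real^3) \<Rightarrow> real^2 \<Rightarrow> real^3" where
  "unit_normal X p = (let Xu = frechet_derivative X (at p) (axis 1 1);
                          Xv = frechet_derivative X (at p) (axis 2 1)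
                      in (1 / norm (cross3 Xu Xv)) *\<^sub>R cross3 Xu Xv)"

text \<open>v is a principal direction of the surface at parameter p: v is a nonzero
  tangent vector, v = dX_p(w), which is an eigenvector of the shape operator
  S = - dN o (dX)^(-1), i.e. S(v) = - dN_p(w) = lambda v.\<close>
definition principal_direction :: "(real^2 \<Rightarrow> real^3) \<Rightarrow> real^2 \<Rightarrow> real^3 \<Rightarrow> bool" where
  "principal_direction X p v \<longleftrightarrow> v \<noteq> 0 \<and>
     (\<exists>w l. v = frechet_derivative X (at p) w \<and>
            - frechet_derivative (unit_normal X) (at p) w = l *\<^sub>R v)"

definition D1 :: "(real \<Rightarrow> real^3) \<Rightarrow> real \<Rightarrow> real^3" where
  "D1 \<gamma> t = vector_derivative \<gamma> (at t)"
definition D2 :: "(real \<Rightarrow> real^3) \<Rightarrow> real \<Rightarrow> real^3" where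
  "D2 \<gamma> t = vector_derivative (D1 \<gamma>) (at t)"
definition D3 :: "(real \<Rightarrow> real^3) \<Rightarrow> real \<Rightarrow> real^3" where
  "D3 \<gamma> t = vector_derivative (D2 \<gamma>) (at t)"

definition torsion :: "(real \<Rightarrow> real^3) \<Rightarrow> real \<Rightarrow> real" where
  "torsion \<gamma> t = (cross3 (D1 \<gamma> t) (D2 \<gamma> t) \<bullet> D3 \<gamma> t) / (norm (cross3 (D1 \<gamma> t) (D2 \<gamma> t)))^2"

definition geodesic_curvature :: "(real^2 \<Rightarrow> real^3) \<Rightarrow> (real \<Rightarrow> real^2) \<Rightarrow> real \<Rightarrow> real" where
  "geodesic_curvature X \<alpha> t =
     (let \<gamma> = X \<circ> \<alpha> in
       (D2 \<gamma> t \<bullet> cross3 (unit_normal X (\<alpha> t)) (D1 \<gamma> t)) / (norm (D1 \<gamma> t))^3)"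

definition line_of_curvature :: "(real^2 \<Rightarrow> real^3) \<Rightarrow> (real \<Rightarrow> real^2) \<Rightarrow> real set \<Rightarrow> bool" where
  "line_of_curvature X \<alpha> I \<longleftrightarrow> (\<forall>t\<in>I. principal_direction X (\<alpha> t) (D1 (X \<circ> \<alpha>) t))"

end

theory Submission
  imports Defs
begin

(*
  Let T = gamma' be the velocity of gamma = X o alpha and N the unit normal of the surface along
  gamma. On a line of curvature N' is parallel to T (Rodrigues), so (N x T)' = N x gamma''; and the
  geodesic curvature c prescribes the component of gamma'' along N x T. Together these make the
  point gamma + (1/c) (N x T)/|T| stationary. It is therefore the centre m of a sphere of radius
  1/|c| through gamma, and since gamma - m is tangent to the surface, N is orthogonal to the
  radius vector, i.e. the surface meets the sphere orthogonally along gamma.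
  Because c /= 0, T x gamma'' never vanishes, so zero torsion makes the binormal constant and gamma
  planar; a regular curve lying on a sphere and in a plane lies on a circle of positive radius.
*)

section \<open>Smooth maps on open sets of the plane\<close>

definition partial_on ::
    "('a::euclidean_space) set \<Rightarrow> ('a \<Rightarrow> 'b::real_normed_vector) \<Rightarrow> 'a \<Rightarrow> 'a \<Rightarrow> 'b"
  where "partial_on U f i =
    (SOME g. (\<forall>x\<in>U. ((\<lambda>s. f (x + s *\<^sub>R i)) has_vector_derivative g x) (at 0)) \<and> smooth_on U g)"

lemma smooth_on_imp_continuous_on: "smooth_on U f \<Longrightarrow> continuous_on U f"
  by (auto elim: smooth_on.cases)

lemma
  assumes "smooth_on U f" "i \<in> Basis"
  shows has_vector_derivative_partial_on:
      "x \<in> U \<Longrightarrow> ((\<lambda>s. f (x + s *\<^sub>R i)) has_vector_derivative partial_on U f i x) (at 0)"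
    and smooth_on_partial_on: "smooth_on U (partial_on U f i)"
proof -
  have "\<exists>g. (\<forall>x\<in>U. ((\<lambda>s. f (x + s *\<^sub>R i)) has_vector_derivative g x) (at 0)) \<and> smooth_on U g"
    using assms by (auto elim: smooth_on.cases)
  then have "(\<forall>x\<in>U. ((\<lambda>s. f (x + s *\<^sub>R i)) has_vector_derivative partial_on U f i x) (at 0))
      \<and> smooth_on U (partial_on U f i)"
    unfolding partial_on_def by (rule someI_ex)
  then show "x \<in> U \<Longrightarrow> ((\<lambda>s. f (x + s *\<^sub>R i)) has_vector_derivative partial_on U f i x) (at 0)"
    and "smooth_on U (partial_on U f i)" by auto
qed

lemma has_vector_derivative_at_shift:
  fixes f :: "real \<Rightarrow> 'b::real_normed_vector"
  assumes "((\<lambda>s. f (x + s)) has_vector_derivative v) (at 0)"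
  shows "(f has_vector_derivative v) (at x)"
proof -
  have "((\<lambda>u. u - x) has_vector_derivative 1) (at x)"
    by (auto intro!: derivative_eq_intros)
  from vector_diff_chain_at[OF this] have "(((\<lambda>s. f (x + s)) \<circ> (\<lambda>u. u - x)) has_vector_derivative v) (at x)"
    using assms by simp
  then show ?thesis by (simp add: o_def)
qed

lemma smooth_on_real_has_vector_derivative:
  fixes f :: "real \<Rightarrow> 'b::real_normed_vector"
  assumes "smooth_on I f" "x \<in> I"
  shows "(f has_vector_derivative partial_on I f 1 x) (at x)"
  using has_vector_derivative_partial_on[OF assms(1), of 1] assms(2) has_vector_derivative_at_shift
  by auto

lemma has_derivative_from_coordinates_real2:
  fixes f :: "real^2 \<Rightarrow> 'b::real_normed_vector"
  assumes "((\<lambda>(s, t). f (x + s *\<^sub>R axis 1 1 + t *\<^sub>R axis 2 1)) has_derivative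
      (\<lambda>(s, t). s *\<^sub>R v + t *\<^sub>R w)) (at (0, 0))"
  shows "(f has_derivative (\<lambda>h. h$1 *\<^sub>R v + h$2 *\<^sub>R w)) (at x)"
proof -
  let ?L = "\<lambda>z::real^2. ((z - x)$1, (z - x)$2)"
  have "(?L has_derivative (\<lambda>h. (h$1, h$2))) (at x)"
    by (auto intro!: derivative_eq_intros bounded_linear.has_derivative[OF bounded_linear_vec_nth])
  from diff_chain_at[OF this] have
    "(((\<lambda>(s, t). f (x + s *\<^sub>R axis 1 1 + t *\<^sub>R axis 2 1)) \<circ> ?L) has_derivative
      ((\<lambda>(s, t). s *\<^sub>R v + t *\<^sub>R w) \<circ> (\<lambda>h. (h$1, h$2)))) (at x)"
    using assms by simp
  moreover have "x + (z - x)$1 *\<^sub>R axis 1 1 + (z - x)$2 *\<^sub>R axis 2 1 = z" for z :: "real^2"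
    by (simp add: vec_eq_iff forall_2 axis_def)
  ultimately show ?thesis by (simp add: o_def)
qed

lemma has_derivative_real2_partials:
  fixes f :: "real^2 \<Rightarrow> 'b::real_normed_vector"
  assumes "open U" "x \<in> U"
    and f1: "((\<lambda>s. f (x + s *\<^sub>R axis 1 1)) has_vector_derivative v) (at 0)"
    and f2: "\<And>z. z \<in> U \<Longrightarrow> ((\<lambda>s. f (z + s *\<^sub>R axis 2 1)) has_vector_derivative g z) (at 0)"
    and g: "continuous (at x) g"
  shows "(f has_derivative (\<lambda>h. h$1 *\<^sub>R v + h$2 *\<^sub>R g x)) (at x)"
proof (rule has_derivative_from_coordinates_real2)
  let ?p = "\<lambda>s t. x + s *\<^sub>R axis 1 1 + t *\<^sub>R axis 2 1"
  obtain r where "r > 0" "ball x r \<subseteq> U" using assms open_contains_ball by blast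
  define B where "B = ball (0::real) (r / 2)"
  have 0: "0 \<in> B" "open B" "convex B" using \<open>r > 0\<close> by (auto simp: B_def)
  have p_in: "?p s t \<in> U" if "s \<in> B" "t \<in> B" for s t
  proof -
    have "norm (s *\<^sub>R axis 1 1 + t *\<^sub>R axis 2 (1::real) :: real^2) \<le> \<bar>s\<bar> + \<bar>t\<bar>"
      by (rule order_trans[OF norm_triangle_ineq]) simp
    moreover have "dist x (?p s t) = norm (s *\<^sub>R axis 1 1 + t *\<^sub>R axis 2 1 :: real^2)"
      by (simp only: dist_norm norm_minus_commute[of x] add.assoc add_diff_cancel_left')
    ultimately have "dist x (?p s t) < r" using that by (simp add: B_def)
    then show ?thesis using \<open>ball x r \<subseteq> U\<close> by auto
  qed
  have fs: "((\<lambda>s. f (?p s 0)) has_derivative (\<lambda>s. s *\<^sub>R v)) (at 0 within B)"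
    using f1 unfolding has_vector_derivative_def by (auto intro: has_derivative_at_withinI)
  have ft: "((\<lambda>t. f (?p s t)) has_derivative blinfun_scaleR_left (g (?p s t))) (at t within B)"
    if "s \<in> B" "t \<in> B" for s t
  proof -
    have "((\<lambda>u. f (?p s t + u *\<^sub>R axis 2 1)) has_vector_derivative g (?p s t)) (at 0)"
      using f2[OF p_in[OF that]] .
    moreover have "(\<lambda>u. f (?p s (t + u))) = (\<lambda>u. f (?p s t + u *\<^sub>R axis 2 1))"
      by (simp add: algebra_simps)
    ultimately have "((\<lambda>t. f (?p s t)) has_vector_derivative g (?p s t)) (at t)"
      using has_vector_derivative_at_shift[of "\<lambda>t. f (?p s t)"] by simp
    then show ?thesis unfolding has_vector_derivative_def by (auto intro: has_derivative_at_withinI)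
  qed
  have "continuous (at (0, 0)) (\<lambda>(s, t). blinfun_scaleR_left (g (?p s t)))"
  proof -
    have "continuous (at (0::real, 0::real)) (\<lambda>(s, t). ?p s t)"
      unfolding split_beta by (intro continuous_intros)
    then have "continuous (at (0::real, 0::real)) (g \<circ> (\<lambda>(s, t). ?p s t))"
      using g by (intro continuous_at_compose) simp_all
    then have "continuous (at (0::real, 0::real)) (blinfun_scaleR_left \<circ> (g \<circ> (\<lambda>(s, t). ?p s t)))"
      by (rule continuous_at_compose[OF _ linear_continuous_at[OF bounded_linear_blinfun_scaleR_left]])
    then show ?thesis unfolding o_def case_prod_unfold .
  qed
  then have "((\<lambda>(s, t). f (?p s t)) has_derivative (\<lambda>(s, t). s *\<^sub>R v + t *\<^sub>R g (?p 0 0)))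
      (at (0, 0) within B \<times> B)"
    using has_derivative_partialsI[OF fs ft _ 0(1,3)] continuous_at_imp_continuous_at_within
    by (auto simp: split_beta')
  then show "((\<lambda>(s, t). f (?p s t)) has_derivative (\<lambda>(s, t). s *\<^sub>R v + t *\<^sub>R g x)) (at (0, 0))"
    using at_within_open[of "(0, 0)" "B \<times> B"] 0 by (simp add: open_Times)
qed

lemma smooth_on_has_derivative_real2:
  fixes F :: "real^2 \<Rightarrow> 'b::real_normed_vector"
  assumes "smooth_on U F" "open U" "p \<in> U"
  shows "(F has_derivative
      (\<lambda>h. h$1 *\<^sub>R partial_on U F (axis 1 1) p + h$2 *\<^sub>R partial_on U F (axis 2 1) p)) (at p)"
proof (rule has_derivative_real2_partials[OF assms(2,3)])
  show "((\<lambda>s. F (p + s *\<^sub>R axis 1 1)) has_vector_derivative partial_on U F (axis 1 1) p) (at 0)"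
    using has_vector_derivative_partial_on[OF assms(1)] assms(3) by simp
  show "((\<lambda>s. F (z + s *\<^sub>R axis 2 1)) has_vector_derivative partial_on U F (axis 2 1) z) (at 0)"
    if "z \<in> U" for z
    using has_vector_derivative_partial_on[OF assms(1)] that by simp
  show "continuous (at p) (partial_on U F (axis 2 1))"
    using smooth_on_imp_continuous_on[OF smooth_on_partial_on[OF assms(1)]] assms(2,3)
    by (simp add: continuous_on_eq_continuous_at)
qed

lemma frechet_derivative_smooth_on_real2:
  fixes F :: "real^2 \<Rightarrow> 'b::real_normed_vector"
  assumes "smooth_on U F" "open U" "p \<in> U"
  shows "frechet_derivative F (at p) =
    (\<lambda>h. h$1 *\<^sub>R partial_on U F (axis 1 1) p + h$2 *\<^sub>R partial_on U F (axis 2 1) p)"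
  using frechet_derivative_at[OF smooth_on_has_derivative_real2[OF assms]] by simp

lemma has_vector_derivative_smooth_on_comp:
  fixes F :: "real^2 \<Rightarrow> 'b::real_normed_vector"
  assumes "smooth_on U F" "open U" "\<alpha> t \<in> U" and \<alpha>: "(\<alpha> has_vector_derivative v) (at t)"
  shows "((\<lambda>t. F (\<alpha> t)) has_vector_derivative
      v$1 *\<^sub>R partial_on U F (axis 1 1) (\<alpha> t) + v$2 *\<^sub>R partial_on U F (axis 2 1) (\<alpha> t)) (at t)"
  using diff_chain_at[OF \<alpha>[unfolded has_vector_derivative_def] smooth_on_has_derivative_real2[OF assms(1-3)]]
  by (simp add: has_vector_derivative_def o_def scaleR_add_right)

lemma has_real_derivative_component:
  "(f has_vector_derivative f') (at t) \<Longrightarrow> ((\<lambda>t. f t $ i) has_real_derivative f' $ i) (at t)"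
  using bounded_linear.has_vector_derivative[OF bounded_linear_vec_nth]
  by (simp add: has_real_derivative_iff_has_vector_derivative)

section \<open>Space curves\<close>

unbundle cross3_syntax

lemma has_real_derivative_inverse_norm:
  fixes V :: "real \<Rightarrow> 'a::real_inner"
  assumes V: "(V has_vector_derivative V') (at t)" and "V t \<noteq> 0"
  shows "((\<lambda>t. 1 / norm (V t)) has_real_derivative - (V t \<bullet> V') / norm (V t) ^ 3) (at t)"
proof -
  have "((\<lambda>t. norm (V t)) has_derivative (\<lambda>h. (h *\<^sub>R V') \<bullet> sgn (V t))) (at t)"
    using has_derivative_compose[OF V[unfolded has_vector_derivative_def]
        has_derivative_norm[OF \<open>V t \<noteq> 0\<close>]] .
  moreover have "(\<lambda>h. (h *\<^sub>R V') \<bullet> sgn (V t)) = (*) ((V t \<bullet> V') / norm (V t))"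
    by (auto simp: sgn_div_norm inner_commute divide_inverse)
  ultimately have "((\<lambda>t. norm (V t)) has_real_derivative (V t \<bullet> V') / norm (V t)) (at t)"
    by (simp add: has_field_derivative_def)
  from DERIV_inverse_fun[OF this] show ?thesis
    using \<open>V t \<noteq> 0\<close> by (simp add: inverse_eq_divide power3_eq_cube power2_eq_square mult.assoc)
qed

lemma has_vector_derivative_normalize_parallel:
  fixes V :: "real \<Rightarrow> 'a::real_inner"
  assumes V: "(V has_vector_derivative q *\<^sub>R V t) (at t)" and "V t \<noteq> 0"
  shows "((\<lambda>t. (1 / norm (V t)) *\<^sub>R V t) has_vector_derivative 0) (at t)"
proof -
  have "(V t \<bullet> q *\<^sub>R V t) / norm (V t) ^ 3 = q / norm (V t)"
    using \<open>V t \<noteq> 0\<close> by (simp add: dot_square_norm power2_eq_square power3_eq_cube)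
  then show ?thesis
    using has_vector_derivative_scaleR[OF has_real_derivative_inverse_norm[OF V \<open>V t \<noteq> 0\<close>] V]
    by simp
qed

lemma bounded_bilinear_cross: "bounded_bilinear cross3"
  using bilinear_cross bilinear_conv_bounded_bilinear by blast

lemma has_vector_derivative_cross:
  fixes f g :: "real \<Rightarrow> real^3"
  assumes "(f has_vector_derivative f') (at t)" "(g has_vector_derivative g') (at t)"
  shows "((\<lambda>t. f t \<times> g t) has_vector_derivative (f t \<times> g' + f' \<times> g t)) (at t)"
  using bounded_bilinear.has_vector_derivative[OF bounded_bilinear_cross assms] .

lemma cross_expand_unit_normal:
  fixes N T A :: "real^3"
  assumes "norm N = 1" "N \<bullet> T = 0"
  shows "(T \<bullet> T) *\<^sub>R (N \<times> A) = (A \<bullet> T) *\<^sub>R (N \<times> T) - (A \<bullet> (N \<times> T)) *\<^sub>R T"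
proof -
  have "(T \<bullet> T) *\<^sub>R (N \<times> A) = (A \<bullet> T) *\<^sub>R (N \<times> T) + (N \<bullet> T) *\<^sub>R (T \<times> A) - (A \<bullet> (N \<times> T)) *\<^sub>R T"
    by (simp add: cross3_simps forall_3)
  then show ?thesis using assms by simp
qed

lemma cross_parallel_if_coplanar:
  fixes T A J :: "real^3"
  assumes "(T \<times> A) \<bullet> J = 0" "T \<times> A \<noteq> 0"
  shows "T \<times> J = (((T \<times> A) \<bullet> (T \<times> J)) / (norm (T \<times> A))\<^sup>2) *\<^sub>R (T \<times> A)"
proof -
  have "((T \<times> A) \<bullet> (T \<times> A)) *\<^sub>R (T \<times> J) - ((T \<times> A) \<bullet> (T \<times> J)) *\<^sub>R (T \<times> A)
      = ((T \<times> A) \<bullet> J) *\<^sub>R (T \<times> (T \<times> A))"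
    by (simp add: cross3_simps forall_3)
  then have E: "(norm (T \<times> A))\<^sup>2 *\<^sub>R (T \<times> J) = ((T \<times> A) \<bullet> (T \<times> J)) *\<^sub>R (T \<times> A)"
    using assms(1) by (simp add: power2_norm_eq_inner)
  have "T \<times> J = (1 / (norm (T \<times> A))\<^sup>2) *\<^sub>R ((norm (T \<times> A))\<^sup>2 *\<^sub>R (T \<times> J))"
    using assms(2) by simp
  then show ?thesis unfolding E by simp
qed

lemma norm_cross_unit_orthogonal:
  fixes N T :: "real^3"
  assumes "norm N = 1" "N \<bullet> T = 0"
  shows "norm (N \<times> T) = norm T"
  using norm_cross_dot[of N T] assms by (simp add: power2_eq_iff_nonneg)

lemma orthogonal_sphere_center_stationary:
  fixes \<gamma> T A N :: "real \<Rightarrow> real^3"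
  assumes \<gamma>: "(\<gamma> has_vector_derivative T t) (at t)" and T: "(T has_vector_derivative A t) (at t)"
    and N: "(N has_vector_derivative - (l *\<^sub>R T t)) (at t)"
    and "T t \<noteq> 0" and N_unit: "norm (N t) = 1" "N t \<bullet> T t = 0"
    and kg: "A t \<bullet> (N t \<times> T t) / norm (T t) ^ 3 = c" and "c \<noteq> 0"
  shows "((\<lambda>t. \<gamma> t + (1 / c) *\<^sub>R ((1 / norm (T t)) *\<^sub>R (N t \<times> T t))) has_vector_derivative 0) (at t)"
proof -
  define n where "n = norm (T t)"
  have "n > 0" using \<open>T t \<noteq> 0\<close> by (simp add: n_def)
  have NT: "((\<lambda>t. N t \<times> T t) has_vector_derivative N t \<times> A t) (at t)"
    using has_vector_derivative_cross[OF N T] by (simp add: cross_mult_left)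
  have "A t \<bullet> (N t \<times> T t) = c * n ^ 3"
    using kg \<open>n > 0\<close> by (simp add: n_def field_simps)
  then have NA: "n\<^sup>2 *\<^sub>R (N t \<times> A t) = (A t \<bullet> T t) *\<^sub>R (N t \<times> T t) - (c * n ^ 3) *\<^sub>R T t"
    using cross_expand_unit_normal[OF N_unit, of "A t"] by (simp add: n_def dot_square_norm)
  have "(1 / n) *\<^sub>R (N t \<times> A t) = (1 / n ^ 3) *\<^sub>R (n\<^sup>2 *\<^sub>R (N t \<times> A t))"
    using \<open>n > 0\<close> by (simp add: power2_eq_square power3_eq_cube)
  also have "\<dots> = ((T t \<bullet> A t) / n ^ 3) *\<^sub>R (N t \<times> T t) - c *\<^sub>R T t"
    unfolding NA using \<open>n > 0\<close> by (simp add: scaleR_diff_right inner_commute)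
  finally have key: "(1 / n) *\<^sub>R (N t \<times> A t) - ((T t \<bullet> A t) / n ^ 3) *\<^sub>R (N t \<times> T t) = - c *\<^sub>R T t"
    by simp
  have "((\<lambda>t. (1 / norm (T t)) *\<^sub>R (N t \<times> T t)) has_vector_derivative - c *\<^sub>R T t) (at t)"
    by (rule has_vector_derivative_eq_rhs[OF has_vector_derivative_scaleR[OF
          has_real_derivative_inverse_norm[OF T \<open>T t \<noteq> 0\<close>] NT]])
      (use key in \<open>simp add: n_def\<close>)
  from bounded_linear.has_vector_derivative[OF bounded_linear_scaleR_right this, of "1 / c"]
  show ?thesis
    using has_vector_derivative_add[OF \<gamma>] \<open>c \<noteq> 0\<close> by fastforce
qed

lemma cross_nonzero_if_triple_nonzero:
  fixes N T A :: "real^3"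
  shows "A \<bullet> (N \<times> T) \<noteq> 0 \<Longrightarrow> T \<times> A \<noteq> 0"
  by (metis cross_triple inner_commute inner_zero_left)

lemma rodrigues_curve_on_orthogonal_sphere:
  fixes \<gamma> T A N :: "real \<Rightarrow> real^3"
  assumes "convex I"
    and \<gamma>: "\<And>t. t \<in> I \<Longrightarrow> (\<gamma> has_vector_derivative T t) (at t)"
    and T: "\<And>t. t \<in> I \<Longrightarrow> (T has_vector_derivative A t) (at t)"
    and N: "\<And>t. t \<in> I \<Longrightarrow> \<exists>l. (N has_vector_derivative - (l *\<^sub>R T t)) (at t)"
    and T_nz: "\<And>t. t \<in> I \<Longrightarrow> T t \<noteq> 0"
    and N_unit: "\<And>t. t \<in> I \<Longrightarrow> norm (N t) = 1" "\<And>t. t \<in> I \<Longrightarrow> N t \<bullet> T t = 0"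
    and kg: "\<And>t. t \<in> I \<Longrightarrow> A t \<bullet> (N t \<times> T t) / norm (T t) ^ 3 = c" and "c \<noteq> 0"
  shows "\<exists>m. \<forall>t\<in>I. dist (\<gamma> t) m = 1 / \<bar>c\<bar> \<and> N t \<bullet> (\<gamma> t - m) = 0"
proof -
  define M where "M t = \<gamma> t + (1 / c) *\<^sub>R ((1 / norm (T t)) *\<^sub>R (N t \<times> T t))" for t
  have "(M has_vector_derivative 0) (at t within I)" if t: "t \<in> I" for t
  proof -
    obtain l where "(N has_vector_derivative - (l *\<^sub>R T t)) (at t)" using N[OF t] by blast
    from orthogonal_sphere_center_stationary[where \<gamma>=\<gamma> and T=T and A=A and N=N and t=t,
        OF \<gamma>[OF t] T[OF t] this T_nz[OF t] N_unit(1,2)[OF t] kg[OF t] \<open>c \<noteq> 0\<close>]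
    show ?thesis unfolding M_def by (rule has_vector_derivative_at_within)
  qed
  then obtain m where m: "\<And>t. t \<in> I \<Longrightarrow> M t = m"
    using has_vector_derivative_zero_constant[OF \<open>convex I\<close>] by blast
  have "dist (\<gamma> t) m = 1 / \<bar>c\<bar> \<and> N t \<bullet> (\<gamma> t - m) = 0" if "t \<in> I" for t
  proof -
    have "\<gamma> t - m = - ((1 / c) *\<^sub>R ((1 / norm (T t)) *\<^sub>R (N t \<times> T t)))"
      using m[OF that] by (auto simp: M_def)
    moreover have "norm (N t \<times> T t) = norm (T t)"
      using norm_cross_unit_orthogonal N_unit that by blast
    ultimately show ?thesis
      using T_nz[OF that] by (simp add: dist_norm dot_cross_self norm_minus_commute[of "\<gamma> t"] abs_mult)
  qed
  then show ?thesis by blast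
qed

lemma torsion_free_curve_planar:
  fixes \<gamma> :: "real \<Rightarrow> real^3"
  assumes "convex I" "t0 \<in> I"
    and \<gamma>: "\<And>t. t \<in> I \<Longrightarrow> (\<gamma> has_vector_derivative D1 \<gamma> t) (at t)"
    and T: "\<And>t. t \<in> I \<Longrightarrow> (D1 \<gamma> has_vector_derivative D2 \<gamma> t) (at t)"
    and A: "\<And>t. t \<in> I \<Longrightarrow> (D2 \<gamma> has_vector_derivative D3 \<gamma> t) (at t)"
    and curved: "\<And>t. t \<in> I \<Longrightarrow> D1 \<gamma> t \<times> D2 \<gamma> t \<noteq> 0"
    and torsion_free: "\<And>t. t \<in> I \<Longrightarrow> torsion \<gamma> t = 0"
  shows "\<exists>n. norm n = 1 \<and> (\<forall>t\<in>I. (\<gamma> t - \<gamma> t0) \<bullet> n = 0)"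
proof -
  define B where "B t = D1 \<gamma> t \<times> D2 \<gamma> t" for t
  have "((\<lambda>t. (1 / norm (B t)) *\<^sub>R B t) has_vector_derivative 0) (at t within I)" if "t \<in> I" for t
  proof -
    have "B t \<bullet> D3 \<gamma> t = 0"
      using torsion_free[OF that] curved[OF that] by (simp add: torsion_def B_def)
    from cross_parallel_if_coplanar[OF this[unfolded B_def] curved[OF that]]
    have "(B has_vector_derivative ((B t \<bullet> (D1 \<gamma> t \<times> D3 \<gamma> t)) / (norm (B t))\<^sup>2) *\<^sub>R B t) (at t)"
      using has_vector_derivative_cross[OF T A, OF that that] unfolding B_def[abs_def] by simp
    from has_vector_derivative_normalize_parallel[OF this]
    show ?thesis using curved[OF that] by (simp add: B_def has_vector_derivative_at_within)
  qed
  then obtain b where b: "\<And>t. t \<in> I \<Longrightarrow> (1 / norm (B t)) *\<^sub>R B t = b"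
    using has_vector_derivative_zero_constant[OF \<open>convex I\<close>] by blast
  have "((\<lambda>t. (\<gamma> t - \<gamma> t0) \<bullet> b) has_vector_derivative 0) (at t within I)" if "t \<in> I" for t
  proof -
    have "D1 \<gamma> t \<bullet> b = 0" using b[OF that, symmetric] by (simp add: B_def dot_cross_self)
    moreover have "((\<lambda>t. (\<gamma> t - \<gamma> t0) \<bullet> b) has_vector_derivative D1 \<gamma> t \<bullet> b) (at t)"
      using bounded_linear.has_vector_derivative[OF bounded_linear_inner_left
          has_vector_derivative_diff[OF \<gamma>[OF that] has_vector_derivative_const]] by simp
    ultimately show ?thesis by (simp add: has_vector_derivative_at_within)
  qed
  then obtain k where "\<And>t. t \<in> I \<Longrightarrow> (\<gamma> t - \<gamma> t0) \<bullet> b = k"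
    using has_vector_derivative_zero_constant[OF \<open>convex I\<close>] by blast
  moreover have "norm b = 1" using b[OF \<open>t0 \<in> I\<close>, symmetric] curved[OF \<open>t0 \<in> I\<close>] by (simp add: B_def)
  ultimately show ?thesis using \<open>t0 \<in> I\<close> by fastforce
qed

lemma sphere_inter_plane:
  fixes x m p n :: "'a::real_inner"
  assumes "norm n = 1" "(x - p) \<bullet> n = 0"
  defines "d \<equiv> (m - p) \<bullet> n"
  shows "(dist x (m - d *\<^sub>R n))\<^sup>2 = (dist x m)\<^sup>2 - d\<^sup>2" and "(x - (m - d *\<^sub>R n)) \<bullet> n = 0"
proof -
  have xm: "(x - m) \<bullet> n = - d"
    using assms by (simp add: inner_diff_left)
  have nn: "n \<bullet> n = 1" using \<open>norm n = 1\<close> by (simp add: dot_square_norm)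
  have "x - (m - d *\<^sub>R n) = (x - m) + d *\<^sub>R n" by simp
  then have "(dist x (m - d *\<^sub>R n))\<^sup>2 = ((x - m) + d *\<^sub>R n) \<bullet> ((x - m) + d *\<^sub>R n)"
    by (simp only: dist_norm power2_norm_eq_inner)
  also have "\<dots> = (x - m) \<bullet> (x - m) + 2 * d * ((x - m) \<bullet> n) + d\<^sup>2 * (n \<bullet> n)"
    by (simp add: inner_add_left inner_add_right inner_commute power2_eq_square algebra_simps)
  also have "\<dots> = (dist x m)\<^sup>2 - d\<^sup>2"
    using xm nn by (simp add: dist_norm dot_square_norm power2_eq_square)
  finally show "(dist x (m - d *\<^sub>R n))\<^sup>2 = (dist x m)\<^sup>2 - d\<^sup>2" .
  show "(x - (m - d *\<^sub>R n)) \<bullet> n = 0"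
    using xm nn by (simp add: inner_diff_left algebra_simps)
qed

lemma regular_curve_in_sphere_and_plane_is_circle:
  fixes \<gamma> :: "real \<Rightarrow> 'a::real_inner"
  assumes "open I" "t0 \<in> I" "(\<gamma> has_vector_derivative v) (at t0)" "v \<noteq> 0"
    and sphere: "\<And>t. t \<in> I \<Longrightarrow> dist (\<gamma> t) m = R"
    and plane: "norm n = 1" "\<And>t. t \<in> I \<Longrightarrow> (\<gamma> t - p) \<bullet> n = 0"
  shows "\<exists>m r n. r > 0 \<and> n \<noteq> 0 \<and> (\<forall>t\<in>I. dist (\<gamma> t) m = r \<and> (\<gamma> t - m) \<bullet> n = 0)"
proof -
  define m' where "m' = m - ((m - p) \<bullet> n) *\<^sub>R n"
  define r where "r = dist (\<gamma> t0) m'"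
  have circle: "dist (\<gamma> t) m' = r \<and> (\<gamma> t - m') \<bullet> n = 0" if "t \<in> I" for t
  proof -
    have "(dist (\<gamma> t) m')\<^sup>2 = (dist (\<gamma> t0) m')\<^sup>2"
      using sphere_inter_plane[OF plane(1) plane(2)[OF that], of m]
        sphere_inter_plane[OF plane(1) plane(2)[OF \<open>t0 \<in> I\<close>], of m] sphere that \<open>t0 \<in> I\<close>
      by (simp add: m'_def)
    then show ?thesis
      using sphere_inter_plane(2)[OF plane(1) plane(2)[OF that]]
      by (simp add: m'_def r_def power2_eq_iff_nonneg)
  qed
  have "r > 0"
  proof (rule ccontr)
    assume "\<not> r > 0"
    then have "\<And>t. t \<in> I \<Longrightarrow> \<gamma> t = m'" using circle by (simp add: r_def)
    then have "(\<gamma> has_vector_derivative 0) (at t0)"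
      using has_vector_derivative_transform_within_open[OF has_vector_derivative_const \<open>open I\<close> \<open>t0 \<in> I\<close>]
      by metis
    then show False using assms(3,4) vector_derivative_unique_at by blast
  qed
  moreover have "n \<noteq> 0" using \<open>norm n = 1\<close> by auto
  ultimately show ?thesis using circle by blast
qed

section \<open>Curves on a regular surface patch\<close>

locale regular_patch =
  fixes X :: "real^2 \<Rightarrow> real^3" and U :: "(real^2) set"
  assumes regular_surface: "regular_surface X U"
begin

abbreviation "Xu \<equiv> partial_on U X (axis 1 1)"
abbreviation "Xv \<equiv> partial_on U X (axis 2 1)"

lemma open_U: "open U" and smooth_X: "smooth_on U X"
  and inj_dX: "p \<in> U \<Longrightarrow> inj (frechet_derivative X (at p))"
  using regular_surface unfolding regular_surface_def by auto

lemma smooth_Xu: "smooth_on U Xu" and smooth_Xv: "smooth_on U Xv"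
  using smooth_on_partial_on[OF smooth_X] by auto

lemma frechet_derivative_X:
  "p \<in> U \<Longrightarrow> frechet_derivative X (at p) = (\<lambda>h. h$1 *\<^sub>R Xu p + h$2 *\<^sub>R Xv p)"
  by (rule frechet_derivative_smooth_on_real2[OF smooth_X open_U])

lemma Xu_cross_Xv_nonzero:
  assumes "p \<in> U" shows "Xu p \<times> Xv p \<noteq> 0"
proof
  assume "Xu p \<times> Xv p = 0"
  let ?dX = "frechet_derivative X (at p)"
  have "?dX 0 = 0" by (simp add: frechet_derivative_X[OF assms])
  then have dX_eq_0: "h = 0" if "?dX h = 0" for h
    using inj_dX[OF assms] that by (metis injD)
  have "?dX ((Xv p \<bullet> Xv p) *\<^sub>R axis 1 1 - (Xu p \<bullet> Xv p) *\<^sub>R axis 2 1) = Xv p \<times> (Xu p \<times> Xv p)"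
    by (simp add: frechet_derivative_X[OF assms] Lagrange axis_def inner_commute)
  then have "(Xv p \<bullet> Xv p) *\<^sub>R axis 1 1 - (Xu p \<bullet> Xv p) *\<^sub>R axis 2 1 = (0 :: real^2)"
    using \<open>Xu p \<times> Xv p = 0\<close> by (intro dX_eq_0) simp
  then have "Xv p \<bullet> Xv p = 0" by (simp add: vec_eq_iff forall_2 axis_def)
  then have "?dX (axis 2 1) = 0" by (simp add: frechet_derivative_X[OF assms] axis_def)
  then show False using dX_eq_0 by (metis axis_eq_0_iff zero_neq_one)
qed

lemma unit_normal_eq:
  "p \<in> U \<Longrightarrow> unit_normal X p = (1 / norm (Xu p \<times> Xv p)) *\<^sub>R (Xu p \<times> Xv p)"
  unfolding unit_normal_def Let_def by (simp add: frechet_derivative_X axis_def)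

lemma norm_unit_normal: "p \<in> U \<Longrightarrow> norm (unit_normal X p) = 1"
  using Xu_cross_Xv_nonzero by (simp add: unit_normal_eq)

lemma unit_normal_orthogonal: "p \<in> U \<Longrightarrow> unit_normal X p \<bullet> frechet_derivative X (at p) w = 0"
  by (simp add: unit_normal_eq frechet_derivative_X inner_add_right dot_cross_self)

lemma unit_normal_differentiable:
  assumes "p \<in> U" shows "unit_normal X differentiable (at p)"
proof -
  have "Xu differentiable (at p)" "Xv differentiable (at p)"
    using smooth_on_has_derivative_real2[OF smooth_Xu open_U assms]
      smooth_on_has_derivative_real2[OF smooth_Xv open_U assms] by (auto intro: differentiableI)
  then have "(\<lambda>q. Xu q \<times> Xv q) differentiable (at p)"
    using bounded_bilinear.FDERIV[OF bounded_bilinear_cross] unfolding differentiable_def by blast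
  moreover from this have "(\<lambda>q. norm (Xu q \<times> Xv q)) differentiable (at p)"
    using differentiable_compose[where g = "\<lambda>q. Xu q \<times> Xv q" and f = norm and x = p]
      Xu_cross_Xv_nonzero[OF assms] by simp
  then have "(\<lambda>q. 1 / norm (Xu q \<times> Xv q)) differentiable (at p)"
    using Xu_cross_Xv_nonzero[OF assms] by (intro differentiable_divide differentiable_const) simp_all
  ultimately have "(\<lambda>q. (1 / norm (Xu q \<times> Xv q)) *\<^sub>R (Xu q \<times> Xv q)) differentiable (at p)"
    by (rule differentiable_scaleR[rotated])
  then obtain D where "((\<lambda>q. (1 / norm (Xu q \<times> Xv q)) *\<^sub>R (Xu q \<times> Xv q)) has_derivative D) (at p)"
    unfolding differentiable_def by blast
  then have "(unit_normal X has_derivative D) (at p)"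
    by (rule has_derivative_transform_within_open[OF _ open_U assms]) (simp add: unit_normal_eq)
  then show ?thesis by (rule differentiableI)
qed

lemma principal_direction_eigenvector:
  assumes "p \<in> U" "principal_direction X p (frechet_derivative X (at p) w)"
  obtains l where "frechet_derivative (unit_normal X) (at p) w = - (l *\<^sub>R frechet_derivative X (at p) w)"
proof -
  obtain w' l where "frechet_derivative X (at p) w = frechet_derivative X (at p) w'"
    and l: "- frechet_derivative (unit_normal X) (at p) w' = l *\<^sub>R frechet_derivative X (at p) w"
    using assms(2) unfolding principal_direction_def by blast
  then have "w' = w" using inj_dX[OF assms(1)] by (metis injD)
  with l have "frechet_derivative (unit_normal X) (at p) w = - (l *\<^sub>R frechet_derivative X (at p) w)"
    by (metis minus_minus)
  then show ?thesis by (rule that)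
qed

end

locale curve_on_patch = regular_patch +
  fixes \<alpha> :: "real \<Rightarrow> real^2" and I :: "real set"
  assumes open_I: "open I" and smooth_\<alpha>: "smooth_on I \<alpha>" and \<alpha>_in_U: "\<alpha> ` I \<subseteq> U"
begin

abbreviation "\<alpha>' \<equiv> partial_on I \<alpha> 1"
abbreviation "\<alpha>'' \<equiv> partial_on I \<alpha>' 1"

lemma has_vector_derivative_\<alpha>:
  assumes "t \<in> I"
  shows "(\<alpha> has_vector_derivative \<alpha>' t) (at t)" "(\<alpha>' has_vector_derivative \<alpha>'' t) (at t)"
    and "(\<alpha>'' has_vector_derivative partial_on I \<alpha>'' 1 t) (at t)"
  using assms smooth_\<alpha>
  by (auto intro!: smooth_on_real_has_vector_derivative smooth_on_partial_on)

definition deriv_along :: "(real^2 \<Rightarrow> 'b::real_normed_vector) \<Rightarrow> real \<Rightarrow> 'b" where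
  "deriv_along F t =
    \<alpha>' t $ 1 *\<^sub>R partial_on U F (axis 1 1) (\<alpha> t) + \<alpha>' t $ 2 *\<^sub>R partial_on U F (axis 2 1) (\<alpha> t)"

lemma has_vector_derivative_comp_\<alpha>:
  "smooth_on U F \<Longrightarrow> t \<in> I \<Longrightarrow> ((\<lambda>t. F (\<alpha> t)) has_vector_derivative deriv_along F t) (at t)"
  unfolding deriv_along_def using \<alpha>_in_U
  by (intro has_vector_derivative_smooth_on_comp[OF _ open_U] has_vector_derivative_\<alpha>) auto

lemma differentiable_comp_\<alpha>:
  "smooth_on U F \<Longrightarrow> t \<in> I \<Longrightarrow> (\<lambda>t. F (\<alpha> t)) differentiable (at t)"
  using has_vector_derivative_comp_\<alpha> by (rule differentiableI_vector)

lemma differentiable_\<alpha>'_component: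
  assumes "t \<in> I"
  shows "(\<lambda>t. \<alpha>' t $ i) differentiable (at t)" and "(\<lambda>t. \<alpha>'' t $ i) differentiable (at t)"
  using has_real_derivative_component[OF has_vector_derivative_\<alpha>(2)[OF assms]]
    has_real_derivative_component[OF has_vector_derivative_\<alpha>(3)[OF assms]]
  by (auto simp: has_real_derivative_iff_has_vector_derivative intro: differentiableI_vector)

lemma differentiable_partial_comp_\<alpha>:
  "smooth_on U F \<Longrightarrow> t \<in> I \<Longrightarrow> i \<in> {1, 2} \<Longrightarrow>
    (\<lambda>t. partial_on U F (axis i 1) (\<alpha> t)) differentiable (at t)"
  by (intro differentiable_comp_\<alpha> smooth_on_partial_on) auto

lemma differentiable_deriv_along:
  "smooth_on U F \<Longrightarrow> t \<in> I \<Longrightarrow> deriv_along F differentiable (at t)"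
  unfolding deriv_along_def
  by (intro differentiable_add differentiable_scaleR differentiable_\<alpha>'_component
      differentiable_partial_comp_\<alpha>) simp_all

definition second_deriv_along :: "(real^2 \<Rightarrow> 'b::real_normed_vector) \<Rightarrow> real \<Rightarrow> 'b" where
  "second_deriv_along F t =
    (\<alpha>' t $ 1 *\<^sub>R deriv_along (partial_on U F (axis 1 1)) t + \<alpha>'' t $ 1 *\<^sub>R partial_on U F (axis 1 1) (\<alpha> t))
    + (\<alpha>' t $ 2 *\<^sub>R deriv_along (partial_on U F (axis 2 1)) t + \<alpha>'' t $ 2 *\<^sub>R partial_on U F (axis 2 1) (\<alpha> t))"

lemma has_vector_derivative_deriv_along:
  assumes "smooth_on U F" "t \<in> I"
  shows "(deriv_along F has_vector_derivative second_deriv_along F t) (at t)"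
proof -
  have c: "((\<lambda>t. \<alpha>' t $ i) has_real_derivative \<alpha>'' t $ i) (at t)" for i
    using has_real_derivative_component[OF has_vector_derivative_\<alpha>(2)[OF assms(2)]] .
  have p: "((\<lambda>t. partial_on U F (axis i 1) (\<alpha> t)) has_vector_derivative
      deriv_along (partial_on U F (axis i 1)) t) (at t)" if "i \<in> {1, 2}" for i
    using that assms by (intro has_vector_derivative_comp_\<alpha> smooth_on_partial_on) auto
  have "deriv_along F = (\<lambda>t. \<alpha>' t $ 1 *\<^sub>R partial_on U F (axis 1 1) (\<alpha> t)
      + \<alpha>' t $ 2 *\<^sub>R partial_on U F (axis 2 1) (\<alpha> t))"
    by (simp add: fun_eq_iff deriv_along_def)
  then show ?thesis
    using has_vector_derivative_add[OF has_vector_derivative_scaleR[OF c p[of 1]]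
        has_vector_derivative_scaleR[OF c p[of 2]]]
    by (simp add: second_deriv_along_def)
qed

lemma differentiable_second_deriv_along:
  assumes "smooth_on U F" "t \<in> I"
  shows "second_deriv_along F differentiable (at t)"
proof -
  have "deriv_along (partial_on U F (axis i 1)) differentiable (at t)" if "i \<in> {1, 2}" for i
    using that by (intro differentiable_deriv_along[OF _ assms(2)] smooth_on_partial_on[OF assms(1)]) auto
  moreover note differentiable_partial_comp_\<alpha>[OF assms]
  ultimately show ?thesis unfolding second_deriv_along_def
    by (intro differentiable_add differentiable_scaleR differentiable_\<alpha>'_component[OF assms(2)]) simp_all
qed

abbreviation "\<gamma> \<equiv> X \<circ> \<alpha>"

lemma D1_eq_deriv_along: "t \<in> I \<Longrightarrow> D1 \<gamma> t = deriv_along X t"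
  unfolding D1_def o_def using has_vector_derivative_comp_\<alpha>[OF smooth_X] by (rule vector_derivative_at)

lemma D2_eq_second_deriv_along: assumes "t \<in> I" shows "D2 \<gamma> t = second_deriv_along X t"
proof -
  have "(D1 \<gamma> has_vector_derivative second_deriv_along X t) (at t)"
    using has_vector_derivative_transform_within_open[OF
        has_vector_derivative_deriv_along[OF smooth_X assms] open_I assms] D1_eq_deriv_along by simp
  then show ?thesis unfolding D2_def by (rule vector_derivative_at)
qed

lemma curve_derivatives:
  assumes "t \<in> I"
  shows "(\<gamma> has_vector_derivative D1 \<gamma> t) (at t)" "(D1 \<gamma> has_vector_derivative D2 \<gamma> t) (at t)"
    and "(D2 \<gamma> has_vector_derivative D3 \<gamma> t) (at t)"
proof -
  show "(\<gamma> has_vector_derivative D1 \<gamma> t) (at t)"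
    using has_vector_derivative_comp_\<alpha>[OF smooth_X assms] D1_eq_deriv_along[OF assms] by (simp add: o_def)
  show "(D1 \<gamma> has_vector_derivative D2 \<gamma> t) (at t)"
    using has_vector_derivative_transform_within_open[OF
        has_vector_derivative_deriv_along[OF smooth_X assms] open_I assms]
      D1_eq_deriv_along D2_eq_second_deriv_along[OF assms]
    by simp
  have "(second_deriv_along X has_vector_derivative vector_derivative (second_deriv_along X) (at t)) (at t)"
    using differentiable_second_deriv_along[OF smooth_X assms] by (rule vector_derivative_works[THEN iffD1])
  then have "(D2 \<gamma> has_vector_derivative vector_derivative (second_deriv_along X) (at t)) (at t)"
    by (rule has_vector_derivative_transform_within_open[OF _ open_I assms])
      (simp add: D2_eq_second_deriv_along)
  then show "(D2 \<gamma> has_vector_derivative D3 \<gamma> t) (at t)"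
    unfolding D3_def using vector_derivative_at by metis
qed

lemma \<alpha>_in_U': "t \<in> I \<Longrightarrow> \<alpha> t \<in> U"
  using \<alpha>_in_U by auto

lemma D1_eq_frechet_derivative: "t \<in> I \<Longrightarrow> D1 \<gamma> t = frechet_derivative X (at (\<alpha> t)) (\<alpha>' t)"
  by (simp add: D1_eq_deriv_along deriv_along_def frechet_derivative_X \<alpha>_in_U')

lemma unit_normal_along:
  assumes "t \<in> I"
  shows "norm (unit_normal X (\<alpha> t)) = 1" and "unit_normal X (\<alpha> t) \<bullet> D1 \<gamma> t = 0"
  using norm_unit_normal[OF \<alpha>_in_U'[OF assms]] unit_normal_orthogonal[OF \<alpha>_in_U'[OF assms]]
  by (simp_all add: D1_eq_frechet_derivative[OF assms])

lemma has_vector_derivative_unit_normal_along: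
  assumes "t \<in> I"
  shows "((\<lambda>t. unit_normal X (\<alpha> t)) has_vector_derivative
      frechet_derivative (unit_normal X) (at (\<alpha> t)) (\<alpha>' t)) (at t)"
proof -
  let ?dN = "frechet_derivative (unit_normal X) (at (\<alpha> t))"
  have dN: "(unit_normal X has_derivative ?dN) (at (\<alpha> t))"
    using unit_normal_differentiable[OF \<alpha>_in_U'[OF assms]] by (rule frechet_derivative_works[THEN iffD1])
  from diff_chain_at[OF has_vector_derivative_\<alpha>(1)[OF assms, unfolded has_vector_derivative_def] dN]
  show ?thesis
    unfolding has_vector_derivative_def o_def
    using linear_cmul[OF has_derivative_linear[OF dN]] by simp
qed

lemma line_of_curvature_rodrigues:
  assumes "line_of_curvature X \<alpha> I" "t \<in> I"
  shows "\<exists>l. ((\<lambda>t. unit_normal X (\<alpha> t)) has_vector_derivative - (l *\<^sub>R D1 \<gamma> t)) (at t)"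
proof -
  have "principal_direction X (\<alpha> t) (D1 \<gamma> t)"
    using assms unfolding line_of_curvature_def by blast
  then have "principal_direction X (\<alpha> t) (frechet_derivative X (at (\<alpha> t)) (\<alpha>' t))"
    using D1_eq_frechet_derivative[OF assms(2)] by simp
  then obtain l
    where "frechet_derivative (unit_normal X) (at (\<alpha> t)) (\<alpha>' t) = - (l *\<^sub>R D1 \<gamma> t)"
    using principal_direction_eigenvector[OF \<alpha>_in_U'[OF assms(2)]] D1_eq_frechet_derivative[OF assms(2)]
    by metis
  then show ?thesis using has_vector_derivative_unit_normal_along[OF assms(2)] by auto
qed

end

theorem lemma3p2:
  fixes X :: "real^2 \<Rightarrow> real^3" and U :: "(real^2) set"
    and \<alpha> :: "real \<Rightarrow> real^2" and a b c :: real
  assumes surf: "regular_surface X U"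
    and ab: "a < b"
    and curve_smooth: "smooth_on {a<..<b} \<alpha>"
    and curve_in: "\<alpha> ` {a<..<b} \<subseteq> U"
    and regular: "\<forall>t\<in>{a<..<b}. D1 (X \<circ> \<alpha>) t \<noteq> 0"
    and loc: "line_of_curvature X \<alpha> {a<..<b}"
    and kg: "\<forall>t\<in>{a<..<b}. geodesic_curvature X \<alpha> t = c"
    and c0: "c \<noteq> 0"
    and tors: "\<forall>t\<in>{a<..<b}. torsion (X \<circ> \<alpha>) t = 0"
  shows "(\<exists>m r n. r > 0 \<and> n \<noteq> 0 \<and>
            (\<forall>t\<in>{a<..<b}. dist ((X \<circ> \<alpha>) t) m = r \<and> ((X \<circ> \<alpha>) t - m) \<bullet> n = 0))
       \<and> (\<exists>m. \<forall>t\<in>{a<..<b}. dist ((X \<circ> \<alpha>) t) m = 1 / \<bar>c\<bar>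
                \<and> unit_normal X (\<alpha> t) \<bullet> ((X \<circ> \<alpha>) t - m) = 0)"
proof -
  interpret curve_on_patch X U \<alpha> "{a<..<b}"
    using surf curve_smooth curve_in by unfold_locales simp_all
  have T_nz: "D1 \<gamma> t \<noteq> 0" if "t \<in> {a<..<b}" for t
    using regular that by simp
  have kg': "D2 \<gamma> t \<bullet> (unit_normal X (\<alpha> t) \<times> D1 \<gamma> t) / norm (D1 \<gamma> t) ^ 3 = c"
    if "t \<in> {a<..<b}" for t
    using kg that by (simp add: geodesic_curvature_def Let_def)
  obtain m where sphere:
    "\<And>t. t \<in> {a<..<b} \<Longrightarrow> dist (\<gamma> t) m = 1 / \<bar>c\<bar> \<and> unit_normal X (\<alpha> t) \<bullet> (\<gamma> t - m) = 0"
    using rodrigues_curve_on_orthogonal_sphere[OF convex_real_interval(8) curve_derivatives(1,2)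
        line_of_curvature_rodrigues[OF loc] T_nz unit_normal_along kg' c0] by blast
  have curved: "D1 \<gamma> t \<times> D2 \<gamma> t \<noteq> 0" if "t \<in> {a<..<b}" for t
    using kg'[OF that] c0 by (intro cross_nonzero_if_triple_nonzero) auto
  define t0 where "t0 = (a + b) / 2"
  have t0: "t0 \<in> {a<..<b}" using ab by (simp add: t0_def)
  obtain n where "norm n = 1" "\<And>t. t \<in> {a<..<b} \<Longrightarrow> (\<gamma> t - \<gamma> t0) \<bullet> n = 0"
    using torsion_free_curve_planar[OF convex_real_interval(8) t0 curve_derivatives curved
        tors[rule_format]] by blast
  from regular_curve_in_sphere_and_plane_is_circle[OF open_greaterThanLessThan t0
      curve_derivatives(1)[OF t0] T_nz[OF t0] _ this]
  have "\<exists>m r n. r > 0 \<and> n \<noteq> 0 \<and> (\<forall>t\<in>{a<..<b}. dist (\<gamma> t) m = r \<and> (\<gamma> t - m) \<bullet> n = 0)"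
    using sphere by blast
  then show ?thesis using sphere by blast
qed

end
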